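(* Let $L$ be a simple Lie algebra over a field $k$ with $|k|>2$, generated by its pure extremal elements, such that there exists a Galois extension $k'/k$ of degree at most $2$ for which the extremal geometry of $L\otimes_k k'$ contains lines, and such that $L$ has symplectic pairs of extremal elements. Let $x,y,c,d\in E$ with $g(x,y)=g(c,d)=1$ such that the pairs $(x,c),(c,y),(y,d),(d,x)$ are symplectic; let $L=\bigoplus_i L_i$ and $L=\bigoplus_i L'_i$ be the $5$-gradings associated with $(x,y)$ and $(c,d)$ respectively, and put $V=L_{-1}\cap L'_{-1}$, $X=L_{-1}\cap L'_0$, $V'=L_{-1}\cap L'_1$, $X'=L_0\cap L'_{-1}$. Then $L_{-1}=V\oplus X\oplus V'$, $L_1=[y,V]\oplus[y,X]\oplus[y,V']$, $L'_{-1}=V\oplus X'\oplus[y,V]$, and $L'_1=V'\oplus[d,X']\oplus[y,V']$.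
   Context: A nonzero $a$ in a Lie algebra $M$ over $F$ is extremal if there is $g_a\colon M\to F$ with $[a,[a,u]]=2g_a(u)a$, $[[a,u],[a,w]]=g_a([u,w])a+g_a(w)[a,u]-g_a(u)[a,w]$, $[a,[u,[a,w]]]=g_a([u,w])a-g_a(w)[a,u]-g_a(u)[a,w]$ for all $u,w$; sandwiches satisfy $[a,[a,u]]=0=[a,[u,[a,w]]]$; pure = non-sandwich; $E$ = set of extremal elements of $L$; $g$ = unique symmetric bilinear form with $g(a,u)=g_a(u)$ for $a\in E$. Pure extremal $a,b$ with $Fa\ne Fb$ are collinear if $[a,b]=0$ and $\lambda a+\mu b$ is extremal or $0$ for all $\lambda,\mu$, symplectic if $[a,b]=0$ and $\lambda a+\mu b$ is extremal or $0$ only when $\lambda\mu=0$; the extremal geometry contains lines iff a collinear pair exists. For $a,b\in E$ with $g(a,b)=1$ the associated $5$-grading is $M_{-2}=ka$, $M_{-1}=[a,U]$, $M_0=\{l:[a,l]\in ka,[b,l]\in kb\}$, $M_1=[b,U]$, $M_2=kb$, $U=\{u:g(u,a)=g(u,b)=g(u,[a,b])=0\}$. *)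

theory Defs
  imports Complex_Main
begin

definition lie_algebra :: "('k::field \<Rightarrow> 'l::ab_group_add \<Rightarrow> 'l) \<Rightarrow> ('l \<Rightarrow> 'l \<Rightarrow> 'l) \<Rightarrow> bool" where
  "lie_algebra sm br \<longleftrightarrow> vector_space sm
     \<and> (\<forall>x y z. br (x + y) z = br x z + br y z)
     \<and> (\<forall>x y z. br x (y + z) = br x y + br x z)
     \<and> (\<forall>a x y. br (sm a x) y = sm a (br x y))
     \<and> (\<forall>a x y. br x (sm a y) = sm a (br x y))
     \<and> (\<forall>x. br x x = 0)
     \<and> (\<forall>x y z. br x (br y z) + br y (br z x) + br z (br x y) = 0)"

definition extremal_with :: "('k::field \<Rightarrow> 'l::ab_group_add \<Rightarrow> 'l) \<Rightarrow> ('l \<Rightarrow> 'l \<Rightarrow> 'l) \<Rightarrow> 'l \<Rightarrow> ('l \<Rightarrow> 'k) \<Rightarrow> bool" where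
  "extremal_with sm br a ga \<longleftrightarrow> a \<noteq> 0 \<and>
     (\<forall>u w. br a (br a u) = sm (2 * ga u) a
       \<and> br (br a u) (br a w) = sm (ga (br u w)) a + sm (ga w) (br a u) - sm (ga u) (br a w)
       \<and> br a (br u (br a w)) = sm (ga (br u w)) a - sm (ga w) (br a u) - sm (ga u) (br a w))"

definition extremal :: "('k::field \<Rightarrow> 'l::ab_group_add \<Rightarrow> 'l) \<Rightarrow> ('l \<Rightarrow> 'l \<Rightarrow> 'l) \<Rightarrow> 'l \<Rightarrow> bool" where
  "extremal sm br a \<longleftrightarrow> (\<exists>ga. extremal_with sm br a ga)"

definition sandwich :: "('k::field \<Rightarrow> 'l::ab_group_add \<Rightarrow> 'l) \<Rightarrow> ('l \<Rightarrow> 'l \<Rightarrow> 'l) \<Rightarrow> 'l \<Rightarrow> bool" where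
  "sandwich sm br a \<longleftrightarrow> extremal sm br a \<and>
     (\<forall>u w. br a (br a u) = 0 \<and> br a (br u (br a w)) = 0)"

definition pure_extremal :: "('k::field \<Rightarrow> 'l::ab_group_add \<Rightarrow> 'l) \<Rightarrow> ('l \<Rightarrow> 'l \<Rightarrow> 'l) \<Rightarrow> 'l \<Rightarrow> bool" where
  "pure_extremal sm br a \<longleftrightarrow> extremal sm br a \<and> \<not> sandwich sm br a"

definition lspan :: "('k::field \<Rightarrow> 'l::ab_group_add \<Rightarrow> 'l) \<Rightarrow> 'l \<Rightarrow> 'l set" where
  "lspan sm a = range (\<lambda>t. sm t a)"

definition collinear :: "('k::field \<Rightarrow> 'l::ab_group_add \<Rightarrow> 'l) \<Rightarrow> ('l \<Rightarrow> 'l \<Rightarrow> 'l) \<Rightarrow> 'l \<Rightarrow> 'l \<Rightarrow> bool" where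
  "collinear sm br a b \<longleftrightarrow> pure_extremal sm br a \<and> pure_extremal sm br b \<and>
     lspan sm a \<noteq> lspan sm b \<and> br a b = 0 \<and>
     (\<forall>s t. extremal sm br (sm s a + sm t b) \<or> sm s a + sm t b = 0)"

definition symplectic :: "('k::field \<Rightarrow> 'l::ab_group_add \<Rightarrow> 'l) \<Rightarrow> ('l \<Rightarrow> 'l \<Rightarrow> 'l) \<Rightarrow> 'l \<Rightarrow> 'l \<Rightarrow> bool" where
  "symplectic sm br a b \<longleftrightarrow> pure_extremal sm br a \<and> pure_extremal sm br b \<and>
     lspan sm a \<noteq> lspan sm b \<and> br a b = 0 \<and>
     (\<forall>s t. (extremal sm br (sm s a + sm t b) \<or> sm s a + sm t b = 0) \<longrightarrow> s * t = 0)"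

definition has_lines :: "('k::field \<Rightarrow> 'l::ab_group_add \<Rightarrow> 'l) \<Rightarrow> ('l \<Rightarrow> 'l \<Rightarrow> 'l) \<Rightarrow> bool" where
  "has_lines sm br \<longleftrightarrow> (\<exists>a b. collinear sm br a b)"

definition lie_subalgebra :: "('k::field \<Rightarrow> 'l::ab_group_add \<Rightarrow> 'l) \<Rightarrow> ('l \<Rightarrow> 'l \<Rightarrow> 'l) \<Rightarrow> 'l set \<Rightarrow> bool" where
  "lie_subalgebra sm br A \<longleftrightarrow> module.subspace sm A \<and> (\<forall>x\<in>A. \<forall>y\<in>A. br x y \<in> A)"

definition lie_ideal :: "('k::field \<Rightarrow> 'l::ab_group_add \<Rightarrow> 'l) \<Rightarrow> ('l \<Rightarrow> 'l \<Rightarrow> 'l) \<Rightarrow> 'l set \<Rightarrow> bool" where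
  "lie_ideal sm br I \<longleftrightarrow> module.subspace sm I \<and> (\<forall>x\<in>I. \<forall>y. br y x \<in> I)"

definition lie_simple :: "('k::field \<Rightarrow> 'l::ab_group_add \<Rightarrow> 'l) \<Rightarrow> ('l \<Rightarrow> 'l \<Rightarrow> 'l) \<Rightarrow> bool" where
  "lie_simple sm br \<longleftrightarrow> (\<exists>x y. br x y \<noteq> 0) \<and>
     (\<forall>I. lie_ideal sm br I \<longrightarrow> I = {0} \<or> I = UNIV)"

definition generated_by_pure_extremal :: "('k::field \<Rightarrow> 'l::ab_group_add \<Rightarrow> 'l) \<Rightarrow> ('l \<Rightarrow> 'l \<Rightarrow> 'l) \<Rightarrow> bool" where
  "generated_by_pure_extremal sm br \<longleftrightarrow>
     (\<forall>A. lie_subalgebra sm br A \<and> {a. pure_extremal sm br a} \<subseteq> A \<longrightarrow> A = UNIV)"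

definition field_hom :: "('a::field \<Rightarrow> 'b::field) \<Rightarrow> bool" where
  "field_hom f \<longleftrightarrow> f 1 = 1 \<and> (\<forall>x y. f (x + y) = f x + f y) \<and> (\<forall>x y. f (x * y) = f x * f y)"

text \<open>sigma : k \<rightarrow> K makes K a Galois extension of k of degree at most 2:
  K is spanned by two elements over sigma(k), and the fixed field of the group of
  automorphisms of K over sigma(k) is exactly sigma(k).\<close>
definition galois_ext_deg_le2 :: "('k::field \<Rightarrow> 'K::field) \<Rightarrow> bool" where
  "galois_ext_deg_le2 \<sigma> \<longleftrightarrow> field_hom \<sigma> \<and>
     (\<exists>e1 e2. \<forall>z. \<exists>s t. z = \<sigma> s * e1 + \<sigma> t * e2) \<and>
     (\<forall>z. (\<forall>\<tau>. bij \<tau> \<and> field_hom \<tau> \<and> (\<forall>a. \<tau> (\<sigma> a) = \<sigma> a) \<longrightarrow> \<tau> z = z) \<longrightarrow> z \<in> range \<sigma>)"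

text \<open>(smK, brK, phi) is the scalar extension L \<otimes>_k K: a K-Lie algebra with a
  k-semilinear injective Lie homomorphism phi whose image spans over K and which maps
  k-independent sets to K-independent sets (i.e. the K-linear extension
  L \<otimes>_k K \<rightarrow> M of phi is an isomorphism).\<close>
definition scalar_extension ::
  "('k::field \<Rightarrow> 'l::ab_group_add \<Rightarrow> 'l) \<Rightarrow> ('l \<Rightarrow> 'l \<Rightarrow> 'l) \<Rightarrow> ('k \<Rightarrow> 'K::field)
   \<Rightarrow> ('K \<Rightarrow> 'm::ab_group_add \<Rightarrow> 'm) \<Rightarrow> ('m \<Rightarrow> 'm \<Rightarrow> 'm) \<Rightarrow> ('l \<Rightarrow> 'm) \<Rightarrow> bool" where
  "scalar_extension sm br \<sigma> smK brK \<phi> \<longleftrightarrow> lie_algebra smK brK \<and>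
     (\<forall>x y. \<phi> (x + y) = \<phi> x + \<phi> y) \<and>
     (\<forall>a x. \<phi> (sm a x) = smK (\<sigma> a) (\<phi> x)) \<and>
     (\<forall>x y. \<phi> (br x y) = brK (\<phi> x) (\<phi> y)) \<and>
     inj \<phi> \<and>
     module.span smK (range \<phi>) = UNIV \<and>
     (\<forall>S. \<not> module.dependent sm S \<longrightarrow> \<not> module.dependent smK (\<phi> ` S))"

definition extremal_form :: "('k::field \<Rightarrow> 'l::ab_group_add \<Rightarrow> 'l) \<Rightarrow> ('l \<Rightarrow> 'l \<Rightarrow> 'l) \<Rightarrow> ('l \<Rightarrow> 'l \<Rightarrow> 'k) \<Rightarrow> bool" where
  "extremal_form sm br g \<longleftrightarrow>
     (\<forall>x y z. g (x + y) z = g x z + g y z) \<and>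
     (\<forall>a x y. g (sm a x) y = a * g x y) \<and>
     (\<forall>x y. g x y = g y x) \<and>
     (\<forall>a. extremal sm br a \<longrightarrow> extremal_with sm br a (g a))"

text \<open>The 5-grading associated with (a,b), g(a,b) = 1.\<close>
definition gradU :: "('l::ab_group_add \<Rightarrow> 'l \<Rightarrow> 'l) \<Rightarrow> ('l \<Rightarrow> 'l \<Rightarrow> 'k::field) \<Rightarrow> 'l \<Rightarrow> 'l \<Rightarrow> 'l set" where
  "gradU br g a b = {u. g u a = 0 \<and> g u b = 0 \<and> g u (br a b) = 0}"

definition grading :: "('k::field \<Rightarrow> 'l::ab_group_add \<Rightarrow> 'l) \<Rightarrow> ('l \<Rightarrow> 'l \<Rightarrow> 'l) \<Rightarrow> ('l \<Rightarrow> 'l \<Rightarrow> 'k)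
    \<Rightarrow> 'l \<Rightarrow> 'l \<Rightarrow> int \<Rightarrow> 'l set" where
  "grading sm br g a b i =
     (if i = -2 then lspan sm a
      else if i = -1 then br a ` gradU br g a b
      else if i = 0 then {l. br a l \<in> lspan sm a \<and> br b l \<in> lspan sm b}
      else if i = 1 then br b ` gradU br g a b
      else if i = 2 then lspan sm b
      else {0})"

definition direct_sum3 :: "'l::ab_group_add set \<Rightarrow> 'l set \<Rightarrow> 'l set \<Rightarrow> 'l set \<Rightarrow> bool" where
  "direct_sum3 S A B C \<longleftrightarrow> S = {a + b + c | a b c. a \<in> A \<and> b \<in> B \<and> c \<in> C} \<and>
     (\<forall>a\<in>A. \<forall>b\<in>B. \<forall>c\<in>C. a + b + c = 0 \<longrightarrow> a = 0 \<and> b = 0 \<and> c = 0)"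

end

theory Submission
  imports Defs
begin

text \<open>
  For a hyperbolic pair (a, b) the projections of L onto the components of its 5-grading are
  explicit expressions in ad a, ad b, g(a, -) and g(b, -). Verifying this needs the invariance
  of g, which follows by transporting a pure extremal element b along the automorphism exp(ad a)
  and using that the witness g_b of a pure extremal element is unique (in characteristic 2
  because two different witnesses would make b a sandwich). When c and d commute with x and y,
  the operators ad c, ad d, g(c, -), g(d, -) commute with the (x, y)-projections, hence the
  projections of the two gradings commute. So every L_i with i \<noteq> 0, being orthogonal to c and d,
  splits along L'_-1, L'_0, L'_1, and ad y maps L_-1 \<inter> L'_j bijectively onto L_1 \<inter> L'_j, with
  inverse -ad x; the same holds with the roles of the two pairs exchanged. Besides simplicity
  and the form g, only g(x, y) = g(c, d) = 1 and the fact that symplectic pairs consist of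
  commuting pure extremal elements are used.
\<close>

locale extremal_lie_algebra =
  fixes sm :: "'k::field \<Rightarrow> 'l::ab_group_add \<Rightarrow> 'l" and br :: "'l \<Rightarrow> 'l \<Rightarrow> 'l"
    and g :: "'l \<Rightarrow> 'l \<Rightarrow> 'k"
  assumes lie: "lie_algebra sm br" and simple: "lie_simple sm br"
    and form: "extremal_form sm br g"
begin

sublocale vs: vector_space sm
  using lie unfolding lie_algebra_def by blast

lemmas scale_distribs =
  vs.scale_left_distrib vs.scale_right_distrib vs.scale_left_diff_distrib vs.scale_right_diff_distrib

lemma br_add_left [simp]: "br (x + y) z = br x z + br y z"
  and br_add_right [simp]: "br x (y + z) = br x y + br x z"
  and br_scale_left [simp]: "br (sm t x) y = sm t (br x y)"
  and br_scale_right [simp]: "br x (sm t y) = sm t (br x y)"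
  and br_self [simp]: "br x x = 0"
  and jacobi_cyclic: "br x (br y z) + br y (br z x) + br z (br x y) = 0"
  using lie unfolding lie_algebra_def by blast+

lemma br_zero_left [simp]: "br 0 x = 0"
  using br_add_left[of 0 0 x] by simp

lemma br_zero_right [simp]: "br x 0 = 0"
  using br_add_right[of x 0 0] by simp

lemma br_minus_left [simp]: "br (- x) y = - br x y"
  using br_add_left[of x "- x" y] by (simp add: add_eq_0_iff)

lemma br_minus_right [simp]: "br x (- y) = - br x y"
  using br_add_right[of x y "- y"] by (simp add: add_eq_0_iff)

lemma br_diff_left [simp]: "br (x - y) z = br x z - br y z"
  using br_add_left[of x "- y" z] by simp

lemma br_diff_right [simp]: "br x (y - z) = br x y - br x z"
  using br_add_right[of x y "- z"] by simp

lemma br_antisym: "br x y = - br y x"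
proof -
  have "br x y + br y x = br (x + y) (x + y)" by (simp only: br_add_left br_add_right) simp
  then show ?thesis by (simp add: eq_neg_iff_add_eq_0)
qed

lemma jacobi: "br x (br y z) = br (br x y) z + br y (br x z)"
  using jacobi_cyclic[of x y z] br_antisym[of z "br x y"] br_antisym[of z x]
  by (simp add: algebra_simps eq_neg_iff_add_eq_0)

lemma br_commuting: "br x y = 0 \<Longrightarrow> br x (br y z) = br y (br x z)"
  using jacobi[of x y z] by simp

lemma g_add_left [simp]: "g (x + y) z = g x z + g y z"
  and g_scale_left [simp]: "g (sm t x) y = t * g x y"
  and g_commute: "g x y = g y x"
  using form unfolding extremal_form_def by blast+

lemma g_add_right [simp]: "g z (x + y) = g z x + g z y"
  using g_add_left g_commute by metis

lemma g_scale_right [simp]: "g y (sm t x) = t * g y x"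
  using g_scale_left g_commute by metis

lemma g_zero_left [simp]: "g 0 y = 0"
  using g_scale_left[of 0 0 y] by simp

lemma g_zero_right [simp]: "g y 0 = 0"
  using g_scale_right[of y 0 0] by simp

lemma g_minus_left [simp]: "g (- x) y = - g x y"
  using g_scale_left[of "- 1" x y] by simp

lemma g_minus_right [simp]: "g y (- x) = - g y x"
  using g_scale_right[of y "- 1" x] by simp

lemma g_diff_left [simp]: "g (x - y) z = g x z - g y z"
  using g_add_left[of x "- y" z] by simp

lemma g_diff_right [simp]: "g z (x - y) = g z x - g z y"
  using g_add_right[of z x "- y"] by simp

lemma scale_double: "sm (2 * t) v = sm t v + sm t v"
  unfolding mult_2 by (rule vs.scale_left_distrib)

lemma no_ad_stable_line:
  assumes "a \<noteq> 0" and stable: "\<And>w. \<exists>t. br a w = sm t a"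
  shows False
proof -
  have "module.subspace sm (lspan sm a)"
    unfolding vs.subspace_def lspan_def
    by (auto simp: image_iff scale_distribs[symmetric] intro: exI[of _ 0])
  moreover have "br y x \<in> lspan sm a" if x: "x \<in> lspan sm a" for x y
  proof -
    obtain s where "x = sm s a" using x unfolding lspan_def by blast
    moreover obtain t where "br a y = sm t a" using stable by blast
    ultimately have "br y x = sm (- (s * t)) a" using br_antisym[of y a] by simp
    then show ?thesis unfolding lspan_def by blast
  qed
  ultimately have "lie_ideal sm br (lspan sm a)"
    unfolding lie_ideal_def by blast
  moreover have "a \<in> lspan sm a"
    unfolding lspan_def using vs.scale_one by (metis rangeI)
  ultimately have "lspan sm a = UNIV"
    using simple \<open>a \<noteq> 0\<close> unfolding lie_simple_def by blast
  then have "\<exists>t. z = sm t a" for z unfolding lspan_def by blast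
  then have "br p q = 0" for p q
    by (metis br_scale_left br_scale_right br_self vs.scale_zero_right)
  then show False using simple unfolding lie_simple_def by blast
qed

lemma extremal_with_g: "extremal sm br a \<Longrightarrow> extremal_with sm br a (g a)"
  using form unfolding extremal_form_def by blast

lemma extremal_nonzero: "extremal sm br a \<Longrightarrow> a \<noteq> 0"
  unfolding extremal_def extremal_with_def by blast

lemma ad_ad_extremal: "extremal sm br a \<Longrightarrow> br a (br a u) = sm (2 * g a u) a"
  and br_ad_ad_extremal: "extremal sm br a \<Longrightarrow>
    br (br a u) (br a w) = sm (g a (br u w)) a + sm (g a w) (br a u) - sm (g a u) (br a w)"
  and ad_br_ad_extremal: "extremal sm br a \<Longrightarrow>
    br a (br u (br a w)) = sm (g a (br u w)) a - sm (g a w) (br a u) - sm (g a u) (br a w)"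
  using extremal_with_g unfolding extremal_with_def by blast+

lemma g_extremal_commuting:
  assumes a: "extremal sm br a" and ab: "br a b = 0"
  shows "g a b = 0" and "g a (br b w) = 0"
proof -
  have key: "sm (g a (br b w)) a = sm (g a b) (br a w)" for w
  proof -
    have "br a (br b (br a w)) = br b (br a (br a w))"
      using br_commuting[OF ab] by simp
    also have "\<dots> = 0"
      using ad_ad_extremal[OF a, of w] br_antisym[of b a] ab by simp
    finally show ?thesis
      using ad_br_ad_extremal[OF a, of b w] ab by simp
  qed
  show gab: "g a b = 0"
  proof (rule ccontr)
    assume "g a b \<noteq> 0"
    then have "br a w = sm (g a (br b w) / g a b) a" for w
      using arg_cong[OF key[of w], of "sm (inverse (g a b))"] by (simp add: divide_inverse mult.commute)
    then show False
      using no_ad_stable_line[OF extremal_nonzero[OF a]] by blast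
  qed
  show "g a (br b w) = 0"
    using key[of w] extremal_nonzero[OF a] unfolding gab by simp
qed

lemma g_extremal_self:
  assumes "extremal sm br a"
  shows "g a a = 0" and "g a (br a w) = 0"
  using g_extremal_commuting[OF assms br_self] by blast+

lemma functional_proportional:
  assumes f_add: "\<And>u v. f (u + v) = f u + f v" and f_scale: "\<And>t u. f (sm t u) = t * f u"
    and h_add: "\<And>u v. h (u + v) = h u + h v" and h_scale: "\<And>t u. h (sm t u) = t * h u"
    and hu: "h u \<noteq> 0" and ker: "\<And>w. h w = 0 \<Longrightarrow> f w = 0"
  shows "f v = f u / h u * h v"
proof -
  define w where "w = v + sm (- (h v / h u)) u"
  have "h w = 0"
    unfolding w_def h_add h_scale using hu by simp
  then have "f w = 0" by (rule ker)
  then show ?thesis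
    unfolding w_def f_add f_scale by (simp add: field_simps)
qed

text \<open>
  The difference d of the two witnesses satisfies [e, w] \<in> F e + F [e, u] whenever d u \<noteq> 0, and
  [e, u] \<notin> F e by simplicity; this forces G1 to be a multiple of d, and then the extremal
  identities for G1 degenerate to the sandwich identities.
\<close>

lemma sandwich_of_distinct_witnesses:
  assumes two: "(2::'k) = 0"
    and w1: "extremal_with sm br e G1" and w2: "extremal_with sm br e G2"
    and G1_add: "\<And>u v. G1 (u + v) = G1 u + G1 v" and G1_scale: "\<And>t u. G1 (sm t u) = t * G1 u"
    and G2_add: "\<And>u v. G2 (u + v) = G2 u + G2 v" and G2_scale: "\<And>t u. G2 (sm t u) = t * G2 u"
    and distinct: "G1 u \<noteq> G2 u"
  shows "sandwich sm br e"
proof -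
  define d where "d v = G2 v - G1 v" for v
  have d_add: "d (v + w) = d v + d w" and d_scale: "d (sm t v) = t * d v" for t v w
    unfolding d_def G1_add G2_add G1_scale G2_scale by (simp_all add: algebra_simps)
  have e0: "e \<noteq> 0" using w1 unfolding extremal_with_def by blast
  have E1: "br e (br e v) = 0" for v
    using w1 two unfolding extremal_with_def by simp
  have E3: "br e (br v (br e w)) = sm (G1 (br v w)) e - sm (G1 w) (br e v) - sm (G1 v) (br e w)"
    for v w using w1 unfolding extremal_with_def by blast
  have D2: "sm (d v) (br e w) = sm (d (br v w)) e + sm (d w) (br e v)" for v w
    using w1 w2 unfolding extremal_with_def d_def
    by (simp add: scale_distribs algebra_simps)
  have D3: "sm (d (br v w)) e - sm (d w) (br e v) - sm (d v) (br e w) = 0" for v w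
    using w1 w2 unfolding extremal_with_def d_def
    by (simp add: scale_distribs algebra_simps)
  have du: "d u \<noteq> 0" using distinct unfolding d_def by simp
  have ad_e: "br e w = sm (d (br u w) / d u) e + sm (d w / d u) (br e u)" for w
    using arg_cong[OF D2[of u w], of "sm (inverse (d u))"] du
    by (simp add: divide_inverse scale_distribs mult.commute)
  have indep: "t = 0" if "sm s e + sm t (br e u) = 0" for s t
  proof (rule ccontr)
    assume "t \<noteq> 0"
    then have "br e u = sm (- s / t) e"
      using arg_cong[OF that, of "sm (inverse t)"]
      by (simp add: divide_inverse scale_distribs mult.commute eq_neg_iff_add_eq_0 add.commute)
    then have "\<exists>r. br e w = sm r e" for w
      using ad_e[of w] by (auto simp: scale_distribs[symmetric])
    then show False using no_ad_stable_line[OF e0] by blast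
  qed
  have ker: "G1 w = 0" if dw: "d w = 0" for w
  proof -
    define r where "r = d (br u w) / d u"
    have ew: "br e w = sm r e"
      using ad_e[of w] dw unfolding r_def by simp
    have "br e (br u e) = 0"
      using E1[of u] br_antisym[of u e] by simp
    then have "sm (G1 (br u w) - G1 u * r) e + sm (- G1 w) (br e u) = 0"
      using E3[of u w] unfolding ew by (simp add: scale_distribs algebra_simps)
    then show ?thesis using indep by fastforce
  qed
  define c where "c = G1 u / d u"
  have G1_prop: "G1 v = c * d v" for v
    unfolding c_def by (rule functional_proportional[OF G1_add G1_scale d_add d_scale du ker])
  have "br e (br v (br e w)) = sm c (sm (d (br v w)) e - sm (d w) (br e v) - sm (d v) (br e w))"
    for v w unfolding E3 G1_prop by (simp add: scale_distribs)
  then have "br e (br v (br e w)) = 0" for v w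
    using D3 by simp
  with E1 w1 show ?thesis
    unfolding sandwich_def extremal_def by blast
qed

lemma extremal_witness_unique:
  assumes pure: "pure_extremal sm br e"
    and w1: "extremal_with sm br e G1" and w2: "extremal_with sm br e G2"
    and G1_add: "\<And>u v. G1 (u + v) = G1 u + G1 v" and G1_scale: "\<And>t u. G1 (sm t u) = t * G1 u"
    and G2_add: "\<And>u v. G2 (u + v) = G2 u + G2 v" and G2_scale: "\<And>t u. G2 (sm t u) = t * G2 u"
  shows "G1 u = G2 u"
proof (cases "(2::'k) = 0")
  case False
  have "sm (2 * G1 u) e = sm (2 * G2 u) e"
    using w1 w2 unfolding extremal_with_def by metis
  then show ?thesis
    using False w1 unfolding extremal_with_def by simp
next
  case True
  then show ?thesis
    using sandwich_of_distinct_witnesses[OF True w1 w2 G1_add G1_scale G2_add G2_scale] pure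
    unfolding pure_extremal_def by blast
qed

lemma extremal_with_automorphism:
  assumes hom: "\<And>u w. \<phi> (br u w) = br (\<phi> u) (\<phi> w)"
    and add: "\<And>u w. \<phi> (u + w) = \<phi> u + \<phi> w" and scale: "\<And>t u. \<phi> (sm t u) = sm t (\<phi> u)"
    and inv: "\<And>u. \<phi> (\<psi> u) = u" "\<And>u. \<psi> (\<phi> u) = u"
    and b: "extremal_with sm br b G"
  shows "extremal_with sm br (\<phi> b) (\<lambda>v. G (\<psi> v))"
  unfolding extremal_with_def
proof (intro conjI allI)
  have diff: "\<phi> (u - w) = \<phi> u - \<phi> w" for u w
    using add[of "u - w" w] by (simp add: eq_diff_eq)
  show "\<phi> b \<noteq> 0"
    using b inv(2)[of b] inv(2)[of 0] add[of 0 0] unfolding extremal_with_def by auto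
  fix u w
  obtain u' w' where uw: "u = \<phi> u'" "w = \<phi> w'" using inv(1) by metis
  show "br (\<phi> b) (br (\<phi> b) u) = sm (2 * G (\<psi> u)) (\<phi> b)"
    and "br (br (\<phi> b) u) (br (\<phi> b) w)
      = sm (G (\<psi> (br u w))) (\<phi> b) + sm (G (\<psi> w)) (br (\<phi> b) u) - sm (G (\<psi> u)) (br (\<phi> b) w)"
    and "br (\<phi> b) (br u (br (\<phi> b) w))
      = sm (G (\<psi> (br u w))) (\<phi> b) - sm (G (\<psi> w)) (br (\<phi> b) u) - sm (G (\<psi> u)) (br (\<phi> b) w)"
    using b unfolding uw extremal_with_def by (simp_all add: hom[symmetric] inv add diff scale)
qed

lemma pure_extremal_automorphism:
  assumes hom: "\<And>u w. \<phi> (br u w) = br (\<phi> u) (\<phi> w)"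
    and add: "\<And>u w. \<phi> (u + w) = \<phi> u + \<phi> w" and scale: "\<And>t u. \<phi> (sm t u) = sm t (\<phi> u)"
    and inv: "\<And>u. \<phi> (\<psi> u) = u" "\<And>u. \<psi> (\<phi> u) = u"
    and b: "pure_extremal sm br b"
  shows "pure_extremal sm br (\<phi> b)"
proof -
  obtain G where G: "extremal_with sm br b G"
    using b unfolding pure_extremal_def extremal_def by blast
  have "extremal sm br (\<phi> b)"
    using extremal_with_automorphism[OF hom add scale inv G] unfolding extremal_def by blast
  moreover have "\<not> sandwich sm br (\<phi> b)"
  proof
    assume "sandwich sm br (\<phi> b)"
    then have "br (\<phi> b) (br (\<phi> b) (\<phi> u)) = 0"
      and "br (\<phi> b) (br (\<phi> u) (br (\<phi> b) (\<phi> w))) = 0" for u w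
      unfolding sandwich_def by blast+
    then have "\<phi> (br b (br b u)) = \<phi> 0" and "\<phi> (br b (br u (br b w))) = \<phi> 0" for u w
      using add[of 0 0] by (simp_all add: hom)
    then have "sandwich sm br b"
      using b inv(2) unfolding sandwich_def pure_extremal_def by metis
    then show False using b unfolding pure_extremal_def by blast
  qed
  ultimately show ?thesis unfolding pure_extremal_def by blast
qed

text \<open>
  exp(ad a) = 1 + ad a + (ad a)^2/2 for extremal a, with (ad a)^2 / 2 written as g(a, -) a so
  that no division by 2 occurs.
\<close>

definition exp_ad :: "'l \<Rightarrow> 'l \<Rightarrow> 'l" where
  "exp_ad a l = l + br a l + sm (g a l) a"

lemma exp_ad_add: "exp_ad a (u + w) = exp_ad a u + exp_ad a w"
  unfolding exp_ad_def by (simp add: scale_distribs algebra_simps)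

lemma exp_ad_scale: "exp_ad a (sm t u) = sm t (exp_ad a u)"
  unfolding exp_ad_def by (simp add: scale_distribs)

lemma exp_ad_uminus_exp_ad:
  assumes "extremal sm br a"
  shows "exp_ad (- a) (exp_ad a l) = l"
  using ad_ad_extremal[OF assms, of l] g_extremal_self[OF assms]
  unfolding exp_ad_def by (simp add: scale_double scale_distribs algebra_simps)

lemma exp_ad_exp_ad_uminus:
  assumes "extremal sm br a"
  shows "exp_ad a (exp_ad (- a) l) = l"
  using ad_ad_extremal[OF assms, of l] g_extremal_self[OF assms]
  unfolding exp_ad_def by (simp add: scale_double scale_distribs algebra_simps)

lemma exp_ad_br:
  assumes a: "extremal sm br a"
  shows "exp_ad a (br u w) = br (exp_ad a u) (exp_ad a w)"
  using ad_ad_extremal[OF a, of w] br_ad_ad_extremal[OF a, of u w] jacobi[of a u w]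
    ad_ad_extremal[OF a, of u] br_antisym[of u a] br_antisym[of "br a u" a]
  unfolding exp_ad_def by (simp add: algebra_simps)

lemma g_invariant:
  assumes a: "extremal sm br a" and b: "pure_extremal sm br b"
  shows "g (br b a) u = g b (br a u)"
proof -
  note automorphism = exp_ad_br[OF a] exp_ad_add exp_ad_scale
    exp_ad_exp_ad_uminus[OF a] exp_ad_uminus_exp_ad[OF a]
  have pure: "pure_extremal sm br (exp_ad a b)"
    by (rule pure_extremal_automorphism[OF automorphism b])
  have "extremal_with sm br (exp_ad a b) (g (exp_ad a b))"
    using pure unfolding pure_extremal_def by (blast intro: extremal_with_g)
  moreover have "extremal_with sm br (exp_ad a b) (\<lambda>v. g b (exp_ad (- a) v))"
    using b unfolding pure_extremal_def
    by (blast intro: extremal_with_automorphism[OF automorphism] extremal_with_g)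
  ultimately have "g (exp_ad a b) u = g b (exp_ad (- a) u)"
    by (rule extremal_witness_unique[OF pure]) (simp_all add: exp_ad_add exp_ad_scale)
  then have "g (br a b) u = - g b (br a u)"
    unfolding exp_ad_def using g_commute[of a b]
    by (simp add: algebra_simps eq_neg_iff_add_eq_0)
  then show ?thesis
    using br_antisym[of b a] by simp
qed

text \<open>
  On L_-1 the map -ad a \<circ> ad b is the identity, and the
  correction terms in proj_neg1 remove its contributions from the other components.
\<close>

definition proj_neg2 :: "'l \<Rightarrow> 'l \<Rightarrow> 'l \<Rightarrow> 'l" where
  "proj_neg2 a b l = sm (g b l) a"

definition proj_neg1 :: "'l \<Rightarrow> 'l \<Rightarrow> 'l \<Rightarrow> 'l" where
  "proj_neg1 a b l = br a (sm (g a (br b l)) b - br b l - sm (g b l) (br a b))"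

definition grade_proj :: "'l \<Rightarrow> 'l \<Rightarrow> int \<Rightarrow> 'l \<Rightarrow> 'l" where
  "grade_proj a b i l =
     (if i = -2 then proj_neg2 a b l
      else if i = -1 then proj_neg1 a b l
      else if i = 0 then l - proj_neg2 a b l - proj_neg1 a b l - proj_neg1 b a l - proj_neg2 b a l
      else if i = 1 then proj_neg1 b a l
      else if i = 2 then proj_neg2 b a l
      else 0)"

lemma grade_proj_add: "grade_proj a b i (l + m) = grade_proj a b i l + grade_proj a b i m"
  unfolding grade_proj_def proj_neg1_def proj_neg2_def by (simp add: scale_distribs algebra_simps)

lemma grade_proj_scale: "grade_proj a b i (sm t l) = sm t (grade_proj a b i l)"
  unfolding grade_proj_def proj_neg1_def proj_neg2_def by (simp add: scale_distribs)

lemma grade_proj_zero: "grade_proj a b i 0 = 0"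
  using grade_proj_scale[of a b i 0 0] by simp

lemma grade_proj_uminus: "grade_proj a b i (- l) = - grade_proj a b i l"
  using grade_proj_scale[of a b i "- 1" l] by simp

lemma grade_proj_diff: "grade_proj a b i (l - m) = grade_proj a b i l - grade_proj a b i m"
  using grade_proj_add[of a b i l "- m"] grade_proj_uminus[of a b i m] by simp

lemma grade_proj_sum:
  "l = grade_proj a b (-2) l + grade_proj a b (-1) l + grade_proj a b 0 l
     + grade_proj a b 1 l + grade_proj a b 2 l"
  unfolding grade_proj_def by simp

lemma grade_proj_0:
  "grade_proj a b 0 l = l - grade_proj a b (-2) l - grade_proj a b (-1) l
     - grade_proj a b 1 l - grade_proj a b 2 l"
  unfolding grade_proj_def by simp

lemma grade_proj_neg2: "grade_proj a b (-2) l = sm (g b l) a"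
  and grade_proj_2: "grade_proj a b 2 l = sm (g a l) b"
  unfolding grade_proj_def proj_neg2_def by simp_all

lemma grade_proj_swap: "grade_proj b a (- i) = grade_proj a b i"
  unfolding grade_proj_def fun_eq_iff by (simp add: algebra_simps)

lemma grading_swap: "grading sm br g b a (- i) = grading sm br g a b i"
proof -
  have "gradU br g b a = gradU br g a b"
    unfolding gradU_def using br_antisym[of b a] by auto
  then show ?thesis unfolding grading_def by auto
qed

end

lemma direct_sum3I:
  assumes "\<And>l. l \<in> S \<Longrightarrow> \<exists>a b c. a \<in> A \<and> b \<in> B \<and> c \<in> C \<and> l = a + b + c"
    and "\<And>a b c. a \<in> A \<Longrightarrow> b \<in> B \<Longrightarrow> c \<in> C \<Longrightarrow> a + b + c \<in> S"
    and "\<And>a b c. a \<in> A \<Longrightarrow> b \<in> B \<Longrightarrow> c \<in> C \<Longrightarrow> a + b + c = 0 \<Longrightarrow> a = 0 \<and> b = 0 \<and> c = 0"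
  shows "direct_sum3 S A B C"
  unfolding direct_sum3_def using assms by blast

locale hyperbolic_pair = extremal_lie_algebra +
  fixes a b
  assumes pure_a: "pure_extremal sm br a" and pure_b: "pure_extremal sm br b"
    and g_ab: "g a b = 1"
begin

lemma extremal_a: "extremal sm br a" and extremal_b: "extremal sm br b"
  using pure_a pure_b unfolding pure_extremal_def by blast+

lemma g_ba: "g b a = 1"
  using g_ab g_commute by metis

sublocale swap: hyperbolic_pair sm br g b a
  by unfold_locales (simp_all add: pure_a pure_b g_ba)

lemma g_self_simps [simp]:
  "g a a = 0" "g b b = 0" "g a (br a w) = 0" "g b (br b w) = 0"
  using g_extremal_self[OF extremal_a] g_extremal_self[OF extremal_b] by auto

lemma g_b_br_ab [simp]: "g b (br a b) = 0"
  using g_self_simps(4)[of a] br_antisym[of a b] by simp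

lemma g_br_ab: "g (br a b) u = g a (br b u)"
  by (rule g_invariant[OF extremal_b pure_a])

lemma g_b_br_a: "g b (br a u) = - g a (br b u)"
  using g_invariant[OF extremal_a pure_b, of u] g_br_ab br_antisym[of b a] by simp

lemma ad_a_br_ab: "br a (br a b) = a + a"
  using ad_ad_extremal[OF extremal_a, of b] scale_double[of 1 a] by (simp add: g_ab)

lemma ad_b_br_ab: "br b (br a b) = - (b + b)"
  using ad_ad_extremal[OF extremal_b, of a] scale_double[of 1 b] br_antisym[of a b]
  by (simp add: g_ba)

lemma scaled_br_ab_in_line_b:
  assumes "sm t (br a b) = sm s b"
  shows "t = 0"
proof (rule ccontr)
  assume "t \<noteq> 0"
  then have ab: "br a b = sm (s / t) b"
    using arg_cong[OF assms, of "sm (inverse t)"] by (simp add: divide_inverse mult.commute)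
  have "br b w = sm (g b (br a w) + s / t * g b w) b" for w
  proof -
    have "br b (br a (br b w)) = br (br b a) (br b w) + br a (br b (br b w))"
      by (rule jacobi)
    also have "\<dots> = 0"
      using ad_ad_extremal[OF extremal_b, of w] br_antisym[of b a]
      by (simp add: ab scale_distribs algebra_simps)
    finally show ?thesis
      using ad_br_ad_extremal[OF extremal_b, of a w] br_antisym[of b a]
      by (simp add: ab g_ba scale_distribs algebra_simps eq_diff_eq)
  qed
  then show False
    using no_ad_stable_line[OF extremal_nonzero[OF extremal_b]] by blast
qed

lemma gradU_iff: "u \<in> gradU br g a b \<longleftrightarrow> g a u = 0 \<and> g b u = 0 \<and> g a (br b u) = 0"
  unfolding gradU_def using g_commute[of u] g_br_ab[of u] by auto

lemma g_gradU:
  assumes "u \<in> gradU br g a b"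
  shows "g a u = 0" "g b u = 0" "g a (br b u) = 0" "g b (br a u) = 0"
proof -
  show "g a u = 0" "g b u = 0" "g a (br b u) = 0"
    using assms unfolding gradU_iff by simp_all
  then show "g b (br a u) = 0"
    using g_b_br_a[of u] by simp
qed

lemma grading_neg1_eq: "grading sm br g a b (-1) = br a ` gradU br g a b"
  unfolding grading_def by simp

lemma grading_neg1E:
  assumes "l \<in> grading sm br g a b (-1)"
  obtains u where "u \<in> gradU br g a b" and "l = br a u"
  using assms unfolding grading_neg1_eq by auto

lemma ad_a_grading_neg1: "l \<in> grading sm br g a b (-1) \<Longrightarrow> br a l = 0"
  by (elim grading_neg1E) (simp add: ad_ad_extremal[OF extremal_a] g_gradU)

lemma ad_a_ad_b_grading_neg1: "l \<in> grading sm br g a b (-1) \<Longrightarrow> br a (br b l) = - l"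
  by (elim grading_neg1E) (simp add: ad_br_ad_extremal[OF extremal_a] g_gradU g_ab)

lemma grading_neg1_gradU:
  assumes l: "l \<in> grading sm br g a b (-1)"
  shows "l \<in> gradU br g a b"
proof -
  obtain u where u: "u \<in> gradU br g a b" and lu: "l = br a u"
    using l by (rule grading_neg1E)
  have "g a (br b l) = 0"
    using g_b_br_a[of l] ad_a_grading_neg1[OF l] by simp
  then show ?thesis
    unfolding gradU_iff using g_gradU[OF u] by (simp add: lu)
qed

lemma ad_b_grading_neg1: "l \<in> grading sm br g a b (-1) \<Longrightarrow> br b l \<in> grading sm br g a b 1"
  using grading_neg1_gradU unfolding grading_def by auto

lemma proj_neg1_in_grading: "proj_neg1 a b l \<in> grading sm br g a b (-1)"
proof -
  let ?u = "sm (g a (br b l)) b - br b l - sm (g b l) (br a b)"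
  have "br b ?u = 0"
    using ad_ad_extremal[OF extremal_b, of l] ad_b_br_ab by (simp add: scale_double scale_distribs)
  then have "?u \<in> gradU br g a b"
    unfolding gradU_iff by (simp add: g_ab)
  then show ?thesis
    unfolding grading_neg1_eq proj_neg1_def by (rule imageI)
qed

lemma grade_proj_grading_neg2:
  assumes "l \<in> grading sm br g a b (-2)"
  shows "grade_proj a b j l = (if j = -2 then l else 0)"
proof -
  obtain t where "l = sm t a"
    using assms unfolding grading_def lspan_def by auto
  then show ?thesis
    unfolding grade_proj_def proj_neg1_def proj_neg2_def
    using br_antisym[of b a] by (simp add: g_ba)
qed

lemma grade_proj_grading_neg1:
  assumes l: "l \<in> grading sm br g a b (-1)"
  shows "grade_proj a b j l = (if j = -1 then l else 0)"
proof -
  note U = g_gradU[OF grading_neg1_gradU[OF l]]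
  have "proj_neg1 a b l = l"
    unfolding proj_neg1_def using ad_a_ad_b_grading_neg1[OF l] by (simp add: U)
  moreover have "proj_neg1 b a l = 0" "proj_neg2 a b l = 0" "proj_neg2 b a l = 0"
    unfolding proj_neg1_def proj_neg2_def using ad_a_grading_neg1[OF l] by (simp_all add: U)
  ultimately show ?thesis
    unfolding grade_proj_def by simp
qed

lemma grade_proj_grading_neg:
  assumes "i < 0" and "l \<in> grading sm br g a b i"
  shows "grade_proj a b j l = (if j = i then l else 0)"
proof -
  consider "i = -2" | "i = -1" | "i < -2"
    using \<open>i < 0\<close> by linarith
  then show ?thesis
  proof cases
    case 3
    then have "l = 0" using assms unfolding grading_def by simp
    then show ?thesis using grade_proj_zero by simp
  qed (use assms grade_proj_grading_neg2 grade_proj_grading_neg1 in blast)+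
qed

lemma grading_0_g_b:
  assumes l: "l \<in> grading sm br g a b 0"
  shows "g b l = 0"
proof -
  obtain r where r: "br b l = sm r b"
    using l unfolding grading_def lspan_def by auto
  have "br b (br a (br b l)) = - sm (r + r) b"
    using ad_b_br_ab by (simp add: r scale_distribs scale_double)
  then have "sm (g b l) (br a b) = sm r b - sm (2 * r) b - sm (g b (br a l)) b"
    using ad_br_ad_extremal[OF extremal_b, of a l] br_antisym[of b a]
    by (simp add: r g_ba scale_distribs algebra_simps)
  also have "\<dots> = sm (- r - g b (br a l)) b"
    by (simp add: scale_distribs scale_double)
  finally show ?thesis
    by (rule scaled_br_ab_in_line_b)
qed

lemma grading_0_proj_neg:
  assumes l: "l \<in> grading sm br g a b 0"
  shows "proj_neg1 a b l = 0" "proj_neg2 a b l = 0"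
proof -
  obtain r where r: "br b l = sm r b"
    using l unfolding grading_def lspan_def by auto
  then show "proj_neg1 a b l = 0" "proj_neg2 a b l = 0"
    unfolding proj_neg1_def proj_neg2_def using grading_0_g_b[OF l] by (simp_all add: g_ab)
qed

lemma ad_a_grade_proj_0: "br a (grade_proj a b 0 l) \<in> lspan sm a"
proof -
  let ?c = "g a (br b l) + g b (br a l) + g b (br a l)"
  have aba: "br a (br b a) = - (a + a)"
    using ad_a_br_ab br_antisym[of b a] by simp
  have bba: "br b (br b a) = b + b"
    using ad_b_br_ab br_antisym[of b a] by simp
  have "br a (proj_neg1 b a l) = br a l - sm (g a l) (br a b) - sm ?c a"
    unfolding proj_neg1_def
    by (simp add: ad_br_ad_extremal[OF extremal_a] aba bba g_ab scale_distribs scale_double)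
  moreover have "br a (proj_neg1 a b l) = 0"
    by (rule ad_a_grading_neg1[OF proj_neg1_in_grading])
  ultimately have "br a (grade_proj a b 0 l) = sm ?c a"
    unfolding grade_proj_def proj_neg2_def by simp
  then show ?thesis
    unfolding lspan_def by blast
qed

lemma grade_proj_in_grading_neg:
  assumes "i < 0"
  shows "grade_proj a b i l \<in> grading sm br g a b i"
proof -
  consider "i = -2" | "i = -1" | "i < -2"
    using assms by linarith
  then show ?thesis
  proof cases
    case 1
    then show ?thesis
      unfolding grading_def lspan_def by (auto simp: grade_proj_neg2)
  next
    case 2
    then show ?thesis
      unfolding grade_proj_def using proj_neg1_in_grading by simp
  next
    case 3
    then show ?thesis
      unfolding grade_proj_def grading_def by simp
  qed
qed

end

text \<open>Reopening the context makes the facts above available for the pair (b, a) under the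
  prefix swap.\<close>

context hyperbolic_pair
begin

lemma grade_proj_grading_0:
  assumes l: "l \<in> grading sm br g a b 0"
  shows "grade_proj a b j l = (if j = 0 then l else 0)"
proof -
  have "l \<in> grading sm br g b a 0"
    using l grading_swap[of b a 0] by simp
  then show ?thesis
    unfolding grade_proj_def
    using grading_0_proj_neg[OF l] swap.grading_0_proj_neg by simp
qed

lemma grade_proj_grading:
  assumes "l \<in> grading sm br g a b i"
  shows "grade_proj a b j l = (if j = i then l else 0)"
proof -
  consider "i < 0" | "i = 0" | "i > 0" by linarith
  then show ?thesis
  proof cases
    case 3
    then have "l \<in> grading sm br g b a (- i)"
      using assms grading_swap[of b a i] by simp
    then show ?thesis
      using swap.grade_proj_grading_neg[of "- i" l "- j"] 3 grade_proj_swap[of b a j] by simp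
  qed (use assms grade_proj_grading_neg grade_proj_grading_0 in auto)
qed

lemma grade_proj_in_grading: "grade_proj a b i l \<in> grading sm br g a b i"
proof -
  consider "i < 0" | "i = 0" | "i > 0" by linarith
  then show ?thesis
  proof cases
    case 2
    have "br b (grade_proj a b 0 l) \<in> lspan sm b"
      using swap.ad_a_grade_proj_0 grade_proj_swap[of b a 0] by simp
    then show ?thesis
      unfolding 2 grading_def using ad_a_grade_proj_0 by simp
  next
    case 3
    then show ?thesis
      using swap.grade_proj_in_grading_neg[of "- i"] grade_proj_swap[of b a i]
        grading_swap[of b a i] by simp
  qed (rule grade_proj_in_grading_neg)
qed

lemma mem_grading_iff: "l \<in> grading sm br g a b i \<longleftrightarrow> grade_proj a b i l = l"
  using grade_proj_in_grading[of i l] grade_proj_grading[of l i i] by metis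

lemma grading_add:
  "l \<in> grading sm br g a b i \<Longrightarrow> m \<in> grading sm br g a b i \<Longrightarrow> l + m \<in> grading sm br g a b i"
  unfolding mem_grading_iff by (simp add: grade_proj_add)

lemma grading_sum_eq_zero:
  assumes "i \<noteq> j" "i \<noteq> k" "j \<noteq> k"
    and "l \<in> grading sm br g a b i" "m \<in> grading sm br g a b j" "n \<in> grading sm br g a b k"
    and sum: "l + m + n = 0"
  shows "l = 0 \<and> m = 0 \<and> n = 0"
proof -
  have "grade_proj a b p l + grade_proj a b p m + grade_proj a b p n = 0" for p
    using arg_cong[OF sum, of "grade_proj a b p"] by (simp add: grade_proj_add grade_proj_zero)
  from this[of i] this[of j] this[of k] show ?thesis
    using assms grade_proj_grading by auto
qed

lemma ad_a_grading_1:
  assumes "m \<in> grading sm br g a b 1"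
  shows "br a m \<in> grading sm br g a b (-1)" and "br b (br a m) = - m"
proof -
  have m: "m \<in> grading sm br g b a (-1)"
    using assms grading_swap[of b a 1] by simp
  show "br a m \<in> grading sm br g a b (-1)"
    using swap.ad_b_grading_neg1[OF m] grading_swap[of b a "-1"] by simp
  show "br b (br a m) = - m"
    by (rule swap.ad_a_ad_b_grading_neg1[OF m])
qed

lemma grade_proj_commute:
  assumes f_add: "\<And>u v. f (u + v) = f u + f v" and f_scale: "\<And>t u. f (sm t u) = sm t (f u)"
    and f_br_a: "\<And>u. f (br a u) = br a (f u)" and f_br_b: "\<And>u. f (br b u) = br b (f u)"
    and f_a: "f a = 0" and f_b: "f b = 0"
    and g_a_f: "\<And>u. g a (f u) = 0" and g_b_f: "\<And>u. g b (f u) = 0"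
  shows "grade_proj a b i (f l) = f (grade_proj a b i l)"
proof -
  have f_minus: "f (- u) = - f u" for u
    using f_scale[of "- 1" u] by simp
  have f_diff: "f (u - v) = f u - f v" for u v
    using f_add[of u "- v"] f_minus[of v] by simp
  have f_zero: "f 0 = 0"
    using f_scale[of 0 0] by simp
  have "f (br a b) = 0" "f (br b a) = 0"
    using f_br_a[of b] f_br_b[of a] f_a f_b by simp_all
  moreover have "g a (br b (f l)) = 0" "g b (br a (f l)) = 0"
    using g_a_f[of "br b l"] g_b_f[of "br a l"] f_br_a f_br_b by simp_all
  ultimately show ?thesis
    unfolding grade_proj_def proj_neg1_def proj_neg2_def
    using f_br_a f_br_b f_a f_b g_a_f g_b_f by (simp add: f_diff f_scale f_zero)
qed

lemma grade_proj_ad_commuting: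
  assumes e: "extremal sm br e" and ea: "br e a = 0" and eb: "br e b = 0"
  shows "grade_proj a b i (br e l) = br e (grade_proj a b i l)"
    and "i \<noteq> 0 \<Longrightarrow> g e (grade_proj a b i l) = 0"
    and "grade_proj a b i e = (if i = 0 then e else 0)"
proof -
  have ae: "br a e = 0" and be: "br b e = 0"
    using ea eb br_antisym[of e] by simp_all
  show "grade_proj a b i (br e l) = br e (grade_proj a b i l)"
    by (rule grade_proj_commute)
      (simp_all add: ea eb br_commuting[OF ae] br_commuting[OF be]
        g_extremal_commuting[OF extremal_a ae] g_extremal_commuting[OF extremal_b be])
  show "i \<noteq> 0 \<Longrightarrow> g e (grade_proj a b i l) = 0"
    unfolding grade_proj_def proj_neg1_def proj_neg2_def
    by (simp add: g_extremal_commuting[OF e ea] g_extremal_commuting[OF e eb])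
  have "e \<in> grading sm br g a b 0"
    unfolding grading_def lspan_def using ae be by (auto intro: exI[of _ 0])
  then show "grade_proj a b i e = (if i = 0 then e else 0)"
    by (rule grade_proj_grading)
qed

lemma grading_uminus: "l \<in> grading sm br g a b i \<Longrightarrow> - l \<in> grading sm br g a b i"
  unfolding mem_grading_iff by (simp add: grade_proj_uminus)

end

locale commuting_hyperbolic_pairs =
  extremal_lie_algebra + P: hyperbolic_pair sm br g a b + Q: hyperbolic_pair sm br g c d
  for a b c d +
  assumes commute: "br a c = 0" "br a d = 0" "br b c = 0" "br b d = 0"
begin

lemma commute_swapped: "br c a = 0" "br d a = 0" "br c b = 0" "br d b = 0"
  using commute br_antisym by (metis neg_equal_0_iff_equal)+

lemma commuting_hyperbolic_pairs_swap: "commuting_hyperbolic_pairs sm br g c d a b"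
  by unfold_locales (simp_all add: commute_swapped)

lemma grade_proj_pairs_commute:
  "grade_proj a b i (grade_proj c d j l) = grade_proj c d j (grade_proj a b i l)"
proof -
  have nonzero: "grade_proj a b i (grade_proj c d j l) = grade_proj c d j (grade_proj a b i l)"
    if "j \<noteq> 0" for j l
    by (rule P.grade_proj_commute)
      (simp_all add: that grade_proj_add grade_proj_scale commute
        Q.grade_proj_ad_commuting[OF P.extremal_a] Q.grade_proj_ad_commuting[OF P.extremal_b])
  show ?thesis
  proof (cases "j = 0")
    case True
    then show ?thesis
      by (simp add: grade_proj_0[of c d] grade_proj_diff nonzero)
  qed (rule nonzero)
qed

lemma grading_decomposition:
  assumes "i \<noteq> 0"
  shows "direct_sum3 (grading sm br g a b i)
    (grading sm br g a b i \<inter> grading sm br g c d (-1))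
    (grading sm br g a b i \<inter> grading sm br g c d 0)
    (grading sm br g a b i \<inter> grading sm br g c d 1)"
proof (rule direct_sum3I)
  fix l assume l: "l \<in> grading sm br g a b i"
  then have "g c l = 0" "g d l = 0"
    using P.grade_proj_ad_commuting(2)[OF Q.extremal_a, of i l]
      P.grade_proj_ad_commuting(2)[OF Q.extremal_b, of i l] assms
    unfolding P.mem_grading_iff by (simp_all add: commute_swapped)
  then have "l = grade_proj c d (-1) l + grade_proj c d 0 l + grade_proj c d 1 l"
    using grade_proj_sum[of l c d] by (simp add: grade_proj_neg2 grade_proj_2)
  moreover have "grade_proj c d j l \<in> grading sm br g a b i" for j
    using l unfolding P.mem_grading_iff by (simp add: grade_proj_pairs_commute)
  ultimately show "\<exists>p q r. p \<in> grading sm br g a b i \<inter> grading sm br g c d (-1)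
      \<and> q \<in> grading sm br g a b i \<inter> grading sm br g c d 0
      \<and> r \<in> grading sm br g a b i \<inter> grading sm br g c d 1 \<and> l = p + q + r"
    using Q.grade_proj_in_grading by blast
next
  fix p q r
  assume "p \<in> grading sm br g a b i \<inter> grading sm br g c d (-1)"
    and "q \<in> grading sm br g a b i \<inter> grading sm br g c d 0"
    and "r \<in> grading sm br g a b i \<inter> grading sm br g c d 1"
  then show "p + q + r \<in> grading sm br g a b i"
    and "p + q + r = 0 \<Longrightarrow> p = 0 \<and> q = 0 \<and> r = 0"
    using P.grading_add Q.grading_sum_eq_zero[of "-1" 0 1 p q r] by auto
qed

lemma ad_b_grading_inter:
  "br b ` (grading sm br g a b (-1) \<inter> grading sm br g c d j)
     = grading sm br g a b 1 \<inter> grading sm br g c d j"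
proof (intro equalityI subsetI)
  fix m assume "m \<in> br b ` (grading sm br g a b (-1) \<inter> grading sm br g c d j)"
  then obtain l where l: "l \<in> grading sm br g a b (-1)" "l \<in> grading sm br g c d j"
    and m: "m = br b l" by blast
  show "m \<in> grading sm br g a b 1 \<inter> grading sm br g c d j"
    using P.ad_b_grading_neg1[OF l(1)] l(2)
      Q.grade_proj_ad_commuting(1)[OF P.extremal_b commute(3,4)]
    unfolding m by (simp add: Q.mem_grading_iff)
next
  fix m assume m: "m \<in> grading sm br g a b 1 \<inter> grading sm br g c d j"
  then have "- br a m \<in> grading sm br g a b (-1) \<inter> grading sm br g c d j"
    using P.ad_a_grading_1(1) P.grading_uminus
      Q.grade_proj_ad_commuting(1)[OF P.extremal_a commute(1,2)]
    by (auto simp: Q.mem_grading_iff grade_proj_uminus)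
  moreover have "m = br b (- br a m)"
    using P.ad_a_grading_1(2) m by simp
  ultimately show "m \<in> br b ` (grading sm br g a b (-1) \<inter> grading sm br g c d j)"
    by blast
qed

end

theorem proposition5p7:
  fixes sm :: "'k::field \<Rightarrow> 'l::ab_group_add \<Rightarrow> 'l"
    and br :: "'l \<Rightarrow> 'l \<Rightarrow> 'l"
    and g :: "'l \<Rightarrow> 'l \<Rightarrow> 'k"
    and x y c d :: 'l
  assumes lie: "lie_algebra sm br"
    and simple: "lie_simple sm br"
    and gen: "generated_by_pure_extremal sm br"
    and card_k: "infinite (UNIV :: 'k set) \<or> card (UNIV :: 'k set) > 2"
    and ext: "\<exists>(\<sigma> :: 'k \<Rightarrow> 'K::field) (smK :: 'K \<Rightarrow> 'm::ab_group_add \<Rightarrow> 'm) brK \<phi>.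
                galois_ext_deg_le2 \<sigma> \<and> scalar_extension sm br \<sigma> smK brK \<phi> \<and> has_lines smK brK"
    and symp_exists: "\<exists>a b. symplectic sm br a b"
    and gform: "extremal_form sm br g"
    and E: "extremal sm br x" "extremal sm br y" "extremal sm br c" "extremal sm br d"
    and gxy: "g x y = 1" and gcd: "g c d = 1"
    and symp: "symplectic sm br x c" "symplectic sm br c y"
              "symplectic sm br y d" "symplectic sm br d x"
  shows "direct_sum3 (grading sm br g x y (-1))
           (grading sm br g x y (-1) \<inter> grading sm br g c d (-1))
           (grading sm br g x y (-1) \<inter> grading sm br g c d 0)
           (grading sm br g x y (-1) \<inter> grading sm br g c d 1)
       \<and> direct_sum3 (grading sm br g x y 1)
           (br y ` (grading sm br g x y (-1) \<inter> grading sm br g c d (-1)))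
           (br y ` (grading sm br g x y (-1) \<inter> grading sm br g c d 0))
           (br y ` (grading sm br g x y (-1) \<inter> grading sm br g c d 1))
       \<and> direct_sum3 (grading sm br g c d (-1))
           (grading sm br g x y (-1) \<inter> grading sm br g c d (-1))
           (grading sm br g x y 0 \<inter> grading sm br g c d (-1))
           (br y ` (grading sm br g x y (-1) \<inter> grading sm br g c d (-1)))
       \<and> direct_sum3 (grading sm br g c d 1)
           (grading sm br g x y (-1) \<inter> grading sm br g c d 1)
           (br d ` (grading sm br g x y 0 \<inter> grading sm br g c d (-1)))
           (br y ` (grading sm br g x y (-1) \<inter> grading sm br g c d 1))"
proof -
  interpret extremal_lie_algebra sm br g
    using lie simple gform by (rule extremal_lie_algebra.intro)
  have pure: "pure_extremal sm br x" "pure_extremal sm br y"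
    "pure_extremal sm br c" "pure_extremal sm br d"
    using symp unfolding symplectic_def by blast+
  have "br x c = 0" "br y d = 0" "br c y = 0" "br d x = 0"
    using symp unfolding symplectic_def by blast+
  then have commute: "br x c = 0" "br x d = 0" "br y c = 0" "br y d = 0"
    using br_antisym by (metis neg_equal_0_iff_equal)+
  interpret commuting_hyperbolic_pairs sm br g x y c d
    by unfold_locales (simp_all add: pure gxy gcd commute)
  interpret swap: commuting_hyperbolic_pairs sm br g c d x y
    by (rule commuting_hyperbolic_pairs_swap)
  have y_image: "br y ` (grading sm br g x y (-1) \<inter> grading sm br g c d j)
      = grading sm br g x y 1 \<inter> grading sm br g c d j" for j
    by (rule ad_b_grading_inter)
  have d_image: "br d ` (grading sm br g x y 0 \<inter> grading sm br g c d (-1))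
      = grading sm br g c d 1 \<inter> grading sm br g x y 0"
    using swap.ad_b_grading_inter[of 0] by (simp add: Int_commute)
  show ?thesis
    unfolding y_image d_image
    using grading_decomposition[of "-1"] grading_decomposition[of 1]
      swap.grading_decomposition[of "-1"] swap.grading_decomposition[of 1]
    by (simp add: Int_commute)
qed

end
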